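(* Let $\alpha=\sigma_4\sigma_3\sigma_2\sigma_1\sigma_4\sigma_3\in B_5$, acting on $F_5$ by $(x_1)\alpha=x_1x_2x_1^{-1}$, $(x_2)\alpha=x_1x_3x_4x_3^{-1}x_1^{-1}$, $(x_3)\alpha=x_1x_3x_5x_3^{-1}x_1^{-1}$, $(x_4)\alpha=x_1x_3x_1^{-1}$, $(x_5)\alpha=x_1$. Then $\det(XI_5-B_\alpha(-1))=(X-1)(X^4+X^3-X^2+X+1)$, which has $-\lambda$ as a root, where $\lambda$ is the largest positive root of $X^4-X^3-X^2-X+1$; and $\mathrm{GR}(\alpha)=\lambda=R(B_\alpha(-1))$, so equality holds in $\mathrm{GR}(\alpha)\ge\sup_{|t_0|=1}R(B_\alpha(t_0))$.
   Context: Automorphisms of $F_5$ act on the right; $\sigma_i$: $(x_i)\sigma_i=x_ix_{i+1}x_i^{-1}$, $(x_{i+1})\sigma_i=x_i$, $(x_k)\sigma_i=x_k$ otherwise. $B_\alpha=(\varphi(\partial((x_i)\alpha)/\partial x_k))_{i,k}$ is the Burau matrix (Fox derivatives, $\varphi(x_i)=t$), $B_\alpha(-1)$ its evaluation at $t=-1$, $R$ the spectral radius, and $\mathrm{GR}(\alpha)=\sup_g\limsup_{p\to\infty}L((g)\alpha^p)^{1/p}$ with $L$ the reduced word length. *)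

theory Defs
  imports "Jordan_Normal_Form.Spectral_Radius" "HOL-Library.Extended_Real" "HOL-Library.Liminf_Limsup"
begin

(* Words in the free group F_5: a letter (j, False) is x_j, (j, True) is x_j^{-1}; generators j = 1..5 *)
type_synonym letter = "nat \<times> bool"

fun fred :: "letter list \<Rightarrow> letter list" where
  "fred [] = []"
| "fred (l # w) = (case fred w of [] \<Rightarrow> [l]
     | m # r \<Rightarrow> (if fst m = fst l \<and> snd m \<noteq> snd l then r else l # m # r))"

definition freduced :: "letter list \<Rightarrow> bool" where
  "freduced w = (\<forall>i. Suc i < length w \<longrightarrow>
      \<not> (fst (w ! i) = fst (w ! Suc i) \<and> snd (w ! i) \<noteq> snd (w ! Suc i)))"

(* elements of F_5 = reduced words in x_1..x_5; reduced word length L is list length *)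
definition F5 :: "letter list set" where
  "F5 = {w. freduced w \<and> (\<forall>l\<in>set w. fst l \<in> {1..5})}"

definition winv :: "letter list \<Rightarrow> letter list" where
  "winv w = rev (map (\<lambda>(j, b). (j, \<not> b)) w)"

(* an endomorphism is given by the images of the generators; (w)phi = act phi w (right action) *)
type_synonym fendo = "nat \<Rightarrow> letter list"

definition act :: "fendo \<Rightarrow> letter list \<Rightarrow> letter list" where
  "act \<phi> w = fred (concat (map (\<lambda>(j, b). if b then winv (\<phi> j) else \<phi> j) w))"

definition gen :: "nat \<Rightarrow> letter list" where
  "gen j = [(j, False)]"

definition idendo :: fendo where "idendo = gen"

definition rcomp :: "fendo \<Rightarrow> fendo \<Rightarrow> fendo" where
  "rcomp \<alpha> \<beta> = (\<lambda>j. act \<beta> (\<alpha> j))"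

definition sigma :: "nat \<Rightarrow> fendo" where
  "sigma i = (\<lambda>j. if j = i then [(i, False), (Suc i, False), (i, True)]
                 else if j = Suc i then [(i, False)] else [(j, False)])"

definition alpha :: fendo where
  "alpha = foldl rcomp idendo (map sigma [4, 3, 2, 1, 4, 3])"

(* phi(d w / d x_k) evaluated at t, via the Fox derivative rules
   d(x_j w) = delta_jk + x_j dw,  d(x_j^{-1} w) = - delta_jk x_j^{-1} + x_j^{-1} dw, phi(x_j) = t *)
fun foxev :: "complex \<Rightarrow> nat \<Rightarrow> letter list \<Rightarrow> complex" where
  "foxev t k [] = 0"
| "foxev t k ((j, False) # w) = (if j = k then 1 else 0) + t * foxev t k w"
| "foxev t k ((j, True) # w) = (if j = k then - inverse t else 0) + inverse t * foxev t k w"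

(* Burau matrix B_phi evaluated at t; row/column index i (0-based) corresponds to x_{i+1} *)
definition burau :: "fendo \<Rightarrow> complex \<Rightarrow> complex mat" where
  "burau \<phi> t = mat 5 5 (\<lambda>(i, k). foxev t (Suc k) (\<phi> (Suc i)))"

definition GR :: "fendo \<Rightarrow> ereal" where
  "GR \<phi> = (SUP g\<in>F5. limsup (\<lambda>p. ereal (real (length ((act \<phi> ^^ p) g)) powr (1 / real p))))"

definition lam :: real where
  "lam = Max {x. 0 < x \<and> x ^ 4 - x ^ 3 - x ^ 2 - x + 1 = 0}"

end

(*
  By the Fox chain rule, the entries of B_alpha(t)^p are the Fox derivatives of
  the words (x_i)alpha^p evaluated at t; for |t| = 1 their moduli are bounded by the word
  lengths. Hence an eigenvalue mu of B_alpha(t) forces some generator to grow at least like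
  |mu|^p, and R(B_alpha(t)) <= GR(alpha). At t = -1 the characteristic polynomial
  (X - 1)(X^4 + X^3 - X^2 + X + 1) vanishes at -lam, so R(B_alpha(-1)) >= lam.

  Embedded into F_9, alpha becomes a map whose transition matrix on the new
  letters x_6, ..., x_9 has Perron-Frobenius eigenvalue lam. Weighting these letters by the
  eigenvector shows that their weight grows like lam^p; each step adds at most a constant plus
  a multiple of that weight to the number of old letters, so word lengths grow at most like
  p lam^p and GR(alpha) <= lam.
*)

theory Submission
  imports Defs "HOL-Real_Asymp.Real_Asymp"
begin

section \<open>Free reduction\<close>

definition letter_inv :: "letter \<Rightarrow> letter" where
  "letter_inv l = (fst l, \<not> snd l)"

definition cancels :: "letter \<Rightarrow> letter \<Rightarrow> bool" where
  "cancels l m \<longleftrightarrow> fst m = fst l \<and> snd m \<noteq> snd l"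

definition red_cons :: "letter \<Rightarrow> letter list \<Rightarrow> letter list" where
  "red_cons l w = (case w of [] \<Rightarrow> [l] | m # r \<Rightarrow> if cancels l m then r else l # m # r)"

lemma cancels_iff: "cancels l m \<longleftrightarrow> m = letter_inv l"
  by (cases l; cases m) (auto simp: cancels_def letter_inv_def)

lemma letter_inv_letter_inv [simp]: "letter_inv (letter_inv l) = l"
  by (simp add: letter_inv_def)

lemma fred_Cons: "fred (l # w) = red_cons l (fred w)"
  by (simp add: red_cons_def cancels_def split: list.split)

declare fred.simps(2) [simp del] fred_Cons [simp]

lemma freduced_iff_successively: "freduced w \<longleftrightarrow> successively (\<lambda>l m. \<not> cancels l m) w"
  by (auto simp: freduced_def successively_conv_nth cancels_def)

lemma freduced_Nil [simp]: "freduced []"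
  and freduced_singleton [simp]: "freduced [l]"
  and freduced_Cons_Cons: "freduced (l # m # r) \<longleftrightarrow> \<not> cancels l m \<and> freduced (m # r)"
  by (simp_all add: freduced_iff_successively)

lemma freduced_ConsD: "freduced (l # w) \<Longrightarrow> freduced w"
  by (cases w) (auto simp: freduced_Cons_Cons)

lemma freduced_red_cons: "freduced w \<Longrightarrow> freduced (red_cons l w)"
  by (cases w) (auto simp: red_cons_def freduced_Cons_Cons freduced_ConsD)

lemma freduced_fred [simp]: "freduced (fred w)"
  by (induction w) (simp_all add: freduced_red_cons)

lemma fred_freduced: "freduced w \<Longrightarrow> fred w = w"
proof (induction w)
  case (Cons l w)
  then have "fred w = w"
    using freduced_ConsD by blast
  with Cons.prems show ?case
    by (cases w) (auto simp: red_cons_def freduced_Cons_Cons)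
qed simp

lemma fred_fred [simp]: "fred (fred w) = fred w"
  by (simp add: fred_freduced)

lemma red_cons_letter_inv: "freduced w \<Longrightarrow> red_cons l (red_cons (letter_inv l) w) = w"
  by (cases w rule: remdups_adj.cases)
    (auto simp: red_cons_def cancels_iff freduced_Cons_Cons)

lemma fred_append: "fred (u @ v) = foldr red_cons u (fred v)"
  by (induction u) simp_all

lemma freduced_foldr_red_cons: "freduced y \<Longrightarrow> freduced (foldr red_cons x y)"
  by (induction x) (simp_all add: freduced_red_cons)

lemma foldr_red_cons_red_cons:
  assumes "freduced y"
  shows "foldr red_cons (red_cons l x) y = red_cons l (foldr red_cons x y)"
proof (cases x)
  case (Cons m r)
  then show ?thesis
    using red_cons_letter_inv[OF freduced_foldr_red_cons[OF assms], of l r]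
    by (auto simp: red_cons_def cancels_iff)
qed (simp add: red_cons_def)

lemma fred_append_fred_right: "fred (u @ fred v) = fred (u @ v)"
  by (simp add: fred_append)

lemma fred_append_fred_left: "fred (fred u @ v) = fred (u @ v)"
  by (induction u) (simp_all add: fred_append foldr_red_cons_red_cons)

lemma fred_append_fred_middle: "fred (u @ fred v @ x) = fred (u @ v @ x)"
  by (metis fred_append_fred_left fred_append_fred_right)

lemma winv_Nil [simp]: "winv [] = []"
  by (simp add: winv_def)

lemma winv_Cons: "winv (l # w) = winv w @ [letter_inv l]"
  by (cases l) (simp add: winv_def letter_inv_def)

lemma winv_append [simp]: "winv (u @ v) = winv v @ winv u"
  by (simp add: winv_def)

lemma winv_winv [simp]: "winv (winv u) = u"
  by (induction u) (simp_all add: winv_Cons winv_def letter_inv_def case_prod_beta)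

lemma fred_append_winv: "fred (u @ winv u) = []"
proof (induction u)
  case (Cons l u)
  have "fred (u @ winv u @ [letter_inv l]) = fred (fred (u @ winv u) @ [letter_inv l])"
    by (metis append.assoc fred_append_fred_left)
  with Cons.IH show ?case
    by (simp add: winv_Cons red_cons_def cancels_iff)
qed simp

lemma fred_winv_append: "fred (winv u @ u) = []"
  using fred_append_winv[of "winv u"] by simp

lemma fred_cancel_inner: "fred (x @ u @ winv u @ y) = fred (x @ y)"
  by (metis append.assoc append.left_neutral fred_append_fred_left fred_append_fred_right
      fred_append_winv)

lemma freduced_winv: "freduced w \<Longrightarrow> freduced (winv w)"
  by (simp add: freduced_iff_successively winv_def successively_map case_prod_beta cancels_def
      eq_commute)

lemma fred_winv_Cons:
  assumes "freduced y"
  shows "fred (winv (l # y)) = winv (red_cons l y)"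
proof (cases y)
  case (Cons m r)
  show ?thesis
  proof (cases "cancels l m")
    case True
    then have "fred (winv (l # y)) = fred (winv r @ [l] @ winv [l])"
      using Cons by (simp add: winv_Cons cancels_iff)
    also have "\<dots> = winv r"
      using fred_cancel_inner[of "winv r" "[l]" "[]"] freduced_ConsD assms Cons
      by (simp add: fred_freduced freduced_winv)
    finally show ?thesis
      using Cons True by (simp add: red_cons_def)
  next
    case False
    then have "freduced (l # y)"
      using assms Cons by (simp add: freduced_Cons_Cons)
    then show ?thesis
      using False Cons by (simp add: red_cons_def fred_freduced freduced_winv)
  qed
qed (simp add: winv_Cons red_cons_def)

lemma fred_winv: "fred (winv u) = winv (fred u)"
proof (induction u)
  case (Cons l u)
  have "fred (winv (l # u)) = fred (winv (l # fred u))"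
    by (metis Cons.IH fred_append_fred_left winv_Cons)
  then show ?case
    by (simp add: fred_winv_Cons)
qed simp

definition img :: "fendo \<Rightarrow> letter \<Rightarrow> letter list" where
  "img \<phi> l = (if snd l then winv (\<phi> (fst l)) else \<phi> (fst l))"

lemma act_img: "act \<phi> w = fred (concat (map (img \<phi>) w))"
  unfolding act_def img_def by (simp add: case_prod_unfold)

lemma img_letter_inv: "img \<phi> (letter_inv l) = winv (img \<phi> l)"
  by (simp add: img_def letter_inv_def)

lemma act_Nil [simp]: "act \<phi> [] = []"
  by (simp add: act_img)

lemma act_Cons: "act \<phi> (l # w) = fred (img \<phi> l @ act \<phi> w)"
  by (simp add: act_img fred_append_fred_right)

lemma act_append: "act \<phi> (u @ v) = fred (act \<phi> u @ act \<phi> v)"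
  by (simp add: act_img fred_append_fred_left fred_append_fred_right)

lemma act_red_cons: "act \<phi> (red_cons l y) = act \<phi> (l # y)"
proof (cases y)
  case (Cons m r)
  then show ?thesis
    using fred_cancel_inner[of "[]" "img \<phi> l"]
    by (auto simp: red_cons_def cancels_iff img_letter_inv act_img)
qed (simp add: red_cons_def)

lemma act_fred: "act \<phi> (fred u) = act \<phi> u"
  by (induction u) (simp_all add: act_red_cons act_Cons)

lemma freduced_act_iter: "freduced g \<Longrightarrow> freduced ((act \<phi> ^^ p) g)"
  by (cases p) (simp_all add: act_def)

lemma act_winv: "act \<phi> (winv u) = winv (act \<phi> u)"
proof -
  have "concat (map (img \<phi>) (winv u)) = winv (concat (map (img \<phi>) u))"
    by (induction u) (simp_all add: winv_Cons img_letter_inv)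
  then show ?thesis
    by (simp add: act_img fred_winv)
qed

lemma act_rcomp: "act (rcomp \<phi> \<psi>) w = act \<psi> (act \<phi> w)"
proof (induction w)
  case (Cons l w)
  have "act (rcomp \<phi> \<psi>) (l # w) = fred (act \<psi> (img \<phi> l) @ act \<psi> (act \<phi> w))"
    unfolding act_Cons Cons.IH by (simp add: img_def rcomp_def act_winv)
  also have "\<dots> = act \<psi> (img \<phi> l @ act \<phi> w)"
    by (simp only: act_append)
  also have "\<dots> = act \<psi> (act \<phi> (l # w))"
    by (simp only: act_Cons act_fred)
  finally show ?case .
qed simp

lemma act_cong:
  assumes "\<And>l. l \<in> set w \<Longrightarrow> \<phi> (fst l) = \<psi> (fst l)"
  shows "act \<phi> w = act \<psi> w"
proof -
  have "map (img \<phi>) w = map (img \<psi>) w"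
    by (rule map_cong) (simp_all add: img_def assms)
  then show ?thesis
    by (simp only: act_img)
qed

lemma act_gen: "act gen w = fred w"
proof -
  have "concat (map (img gen) w) = w"
    by (induction w) (auto simp: img_def gen_def winv_def)
  then show ?thesis
    by (simp add: act_img)
qed

lemma act_conj: "act (\<lambda>j. d @ \<phi> j @ winv d) w = fred (d @ act \<phi> w @ winv d)"
proof (induction w)
  case Nil
  then show ?case
    by (simp add: fred_append_winv)
next
  case (Cons l w)
  have img: "img (\<lambda>j. d @ \<phi> j @ winv d) l = d @ img \<phi> l @ winv d"
    by (simp add: img_def)
  have "act (\<lambda>j. d @ \<phi> j @ winv d) (l # w) = fred ((d @ img \<phi> l) @ winv d @ d @ act \<phi> w @ winv d)"
    unfolding act_Cons Cons.IH img
    using fred_append_fred_right[of "d @ img \<phi> l @ winv d" "d @ act \<phi> w @ winv d"] by simp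
  also have "\<dots> = fred (d @ img \<phi> l @ act \<phi> w @ winv d)"
    using fred_cancel_inner[of "d @ img \<phi> l" "winv d"] by simp
  also have "\<dots> = fred (d @ act \<phi> (l # w) @ winv d)"
    using fred_append_fred_middle[of d "img \<phi> l @ act \<phi> w" "winv d"] by (simp add: act_Cons)
  finally show ?case .
qed

lemma set_fred: "set (fred w) \<subseteq> set w"
  by (induction w) (auto simp: red_cons_def split: list.splits)

lemma letters_winv: "fst ` set (winv u) = fst ` set u"
  by (simp add: winv_def image_image case_prod_beta)

lemma letters_img: "fst ` set (img \<phi> l) = fst ` set (\<phi> (fst l))"
  by (simp add: img_def letters_winv)

lemma letters_act: "fst ` set (act \<phi> w) \<subseteq> (\<Union>l\<in>set w. fst ` set (\<phi> (fst l)))"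
proof -
  have "fst ` set (act \<phi> w) \<subseteq> fst ` set (concat (map (img \<phi>) w))"
    unfolding act_img by (intro image_mono set_fred)
  also have "\<dots> = (\<Union>l\<in>set w. fst ` set (img \<phi> l))"
    by (simp add: image_UN)
  also have "\<dots> = (\<Union>l\<in>set w. fst ` set (\<phi> (fst l)))"
    by (simp add: letters_img)
  finally show ?thesis .
qed

lemma letters_act_iter:
  assumes "\<And>j. j \<in> A \<Longrightarrow> fst ` set (\<phi> j) \<subseteq> A" and "fst ` set w \<subseteq> A"
  shows "fst ` set ((act \<phi> ^^ p) w) \<subseteq> A"
proof (induction p)
  case (Suc p)
  have "fst ` set ((act \<phi> ^^ Suc p) w) \<subseteq> (\<Union>l\<in>set ((act \<phi> ^^ p) w). fst ` set (\<phi> (fst l)))"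
    using letters_act by simp
  also have "\<dots> \<subseteq> A"
    using Suc.IH assms(1) by (intro UN_least) auto
  finally show ?case .
qed (simp add: assms(2))

section \<open>Fox calculus\<close>

fun abel_ev :: "complex \<Rightarrow> letter list \<Rightarrow> complex" where
  "abel_ev t [] = 1"
| "abel_ev t (l # w) = (if snd l then inverse t else t) * abel_ev t w"

lemma abel_ev_append: "abel_ev t (u @ v) = abel_ev t u * abel_ev t v"
  by (induction u) auto

lemma foxev_Cons:
  "foxev t k (l # w) =
     (if fst l = k then if snd l then - inverse t else 1 else 0) + abel_ev t [l] * foxev t k w"
  by (cases l; cases "snd l") auto

lemma foxev_append: "foxev t k (u @ v) = foxev t k u + abel_ev t u * foxev t k v"
  by (induction u) (auto simp: foxev_Cons algebra_simps)

lemma foxev_red_cons: "t \<noteq> 0 \<Longrightarrow> foxev t k (red_cons l w) = foxev t k (l # w)"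
  and abel_ev_red_cons: "t \<noteq> 0 \<Longrightarrow> abel_ev t (red_cons l w) = abel_ev t (l # w)"
  by (cases w; auto simp: red_cons_def cancels_def foxev_Cons field_simps)+

lemma foxev_fred: "t \<noteq> 0 \<Longrightarrow> foxev t k (fred w) = foxev t k w"
  and abel_ev_fred: "t \<noteq> 0 \<Longrightarrow> abel_ev t (fred w) = abel_ev t w"
  by (induction w) (simp_all add: foxev_red_cons abel_ev_red_cons foxev_Cons)

lemma abel_ev_winv: "t \<noteq> 0 \<Longrightarrow> abel_ev t (winv u) = inverse (abel_ev t u)"
  using abel_ev_fred[of t "u @ winv u"]
  by (simp add: fred_append_winv abel_ev_append inverse_unique)

lemma foxev_winv: "t \<noteq> 0 \<Longrightarrow> foxev t k (winv u) = - abel_ev t (winv u) * foxev t k u"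
  using foxev_fred[of t k "winv u @ u"]
  by (simp add: fred_winv_append foxev_append eq_neg_iff_add_eq_0)

context
  fixes t :: complex and \<phi> :: fendo and n :: nat
  assumes t_nonzero: "t \<noteq> 0"
    and abel_ev_image: "\<And>j. j \<in> {1..n} \<Longrightarrow> abel_ev t (\<phi> j) = t"
begin

lemma abel_ev_img: "fst l \<in> {1..n} \<Longrightarrow> abel_ev t (img \<phi> l) = abel_ev t [l]"
  by (simp add: img_def abel_ev_winv t_nonzero abel_ev_image)

lemma foxev_img:
  assumes "fst l \<in> {1..n}"
  shows "foxev t k (img \<phi> l) = (\<Sum>j=1..n. foxev t j [l] * foxev t k (\<phi> j))"
proof -
  have "(\<Sum>j=1..n. foxev t j [l] * foxev t k (\<phi> j))
      = (if snd l then - inverse t else 1) * foxev t k (\<phi> (fst l))"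
    using assms by (simp add: foxev_Cons if_distrib[of "\<lambda>x. x * _"] sum.delta' cong: if_cong)
  then show ?thesis
    using assms by (simp add: img_def foxev_winv abel_ev_winv abel_ev_image t_nonzero)
qed

lemma foxev_act:
  assumes "fst ` set w \<subseteq> {1..n}"
  shows "foxev t k (act \<phi> w) = (\<Sum>j=1..n. foxev t j w * foxev t k (\<phi> j))"
proof -
  have "foxev t k (concat (map (img \<phi>) w)) = (\<Sum>j=1..n. foxev t j w * foxev t k (\<phi> j))"
    using assms
  proof (induction w)
    case (Cons l w)
    then have l: "fst l \<in> {1..n}" and IH: "foxev t k (concat (map (img \<phi>) w))
        = (\<Sum>j=1..n. foxev t j w * foxev t k (\<phi> j))"
      by auto
    have "foxev t k (concat (map (img \<phi>) (l # w)))
        = foxev t k (img \<phi> l) + abel_ev t [l] * foxev t k (concat (map (img \<phi>) w))"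
      by (simp add: foxev_append abel_ev_img[OF l])
    also have "\<dots> = (\<Sum>j=1..n. (foxev t j [l] + abel_ev t [l] * foxev t j w) * foxev t k (\<phi> j))"
      by (simp add: foxev_img[OF l] IH sum_distrib_left sum.distrib algebra_simps)
    also have "\<dots> = (\<Sum>j=1..n. foxev t j (l # w) * foxev t k (\<phi> j))"
      using foxev_append[of t _ "[l]" w] by simp
    finally show ?case .
  qed simp
  then show ?thesis
    by (simp add: act_img foxev_fred t_nonzero)
qed

end

lemma norm_foxev_le_length: "cmod t = 1 \<Longrightarrow> cmod (foxev t k w) \<le> length w"
proof (induction w)
  case (Cons l w)
  let ?c = "if fst l = k then if snd l then - inverse t else 1 else 0"
  have "cmod (foxev t k (l # w)) \<le> cmod ?c + cmod (abel_ev t [l] * foxev t k w)"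
    unfolding foxev_Cons by (rule norm_triangle_ineq)
  also have "\<dots> \<le> 1 + cmod (foxev t k w)"
    using Cons.prems by (simp add: norm_mult norm_inverse)
  finally show ?case
    using Cons by simp
qed simp

lemma power_powr_inverse: "0 \<le> x \<Longrightarrow> 0 < n \<Longrightarrow> (x ^ n) powr (1 / real n) = x"
  by (simp add: root_powr_inverse[symmetric] real_root_power_cancel)

lemma limsup_root_ge:
  fixes len :: "nat \<Rightarrow> nat"
  assumes bound: "\<And>p. c ^ p \<le> C * real (len p)" and "C > 0" and "c \<ge> 0"
  shows "ereal c \<le> limsup (\<lambda>p. ereal (real (len p) powr (1 / real p)))"
proof -
  have "(\<lambda>p. (1 / C) powr (1 / real p)) \<longlonglongrightarrow> 1"
    using \<open>C > 0\<close> by real_asymp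
  then have "(\<lambda>p. ereal (c * (1 / C) powr (1 / real p))) \<longlonglongrightarrow> ereal c"
    using tendsto_mult[OF tendsto_const, of _ 1 sequentially c] by (simp add: lim_ereal)
  then have "ereal c = limsup (\<lambda>p. ereal (c * (1 / C) powr (1 / real p)))"
    by (rule lim_imp_Limsup[OF trivial_limit_sequentially, symmetric])
  also have "\<dots> \<le> limsup (\<lambda>p. ereal (real (len p) powr (1 / real p)))"
  proof (rule Limsup_mono, rule eventually_sequentiallyI)
    fix p :: nat
    assume "p \<ge> 1"
    then have "c * (1 / C) powr (1 / real p) = (c ^ p) powr (1 / real p) * (1 / C) powr (1 / real p)"
      using \<open>c \<ge> 0\<close> by (simp add: power_powr_inverse)
    also have "\<dots> = (c ^ p * (1 / C)) powr (1 / real p)"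
      using \<open>c \<ge> 0\<close> \<open>C > 0\<close> by (intro powr_mult[symmetric]; simp)
    also have "\<dots> \<le> real (len p) powr (1 / real p)"
      using bound[of p] \<open>c \<ge> 0\<close> \<open>C > 0\<close> by (intro powr_mono2) (auto simp: field_simps)
    finally show "ereal (c * (1 / C) powr (1 / real p)) \<le> ereal (real (len p) powr (1 / real p))"
      by simp
  qed
  finally show ?thesis .
qed

lemma limsup_root_le:
  fixes len :: "nat \<Rightarrow> nat"
  assumes bound: "\<And>p. real (len p) \<le> D * (real p + 1) * c ^ p" and "D > 0" and "c \<ge> 0"
  shows "limsup (\<lambda>p. ereal (real (len p) powr (1 / real p))) \<le> ereal c"
proof -
  have "(\<lambda>p. (D * (real p + 1)) powr (1 / real p)) \<longlonglongrightarrow> 1"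
    using \<open>D > 0\<close> by real_asymp
  then have "(\<lambda>p. ereal ((D * (real p + 1)) powr (1 / real p) * c)) \<longlonglongrightarrow> ereal c"
    using tendsto_mult[OF _ tendsto_const, of _ 1 sequentially c] by (simp add: lim_ereal)
  then have lim: "limsup (\<lambda>p. ereal ((D * (real p + 1)) powr (1 / real p) * c)) = ereal c"
    by (rule lim_imp_Limsup[OF trivial_limit_sequentially])
  have "limsup (\<lambda>p. ereal (real (len p) powr (1 / real p)))
      \<le> limsup (\<lambda>p. ereal ((D * (real p + 1)) powr (1 / real p) * c))"
  proof (rule Limsup_mono, rule eventually_sequentiallyI)
    fix p :: nat
    assume "p \<ge> 1"
    have "real (len p) powr (1 / real p) \<le> (D * (real p + 1) * c ^ p) powr (1 / real p)"
      using bound[of p] by (intro powr_mono2) auto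
    also have "\<dots> = (D * (real p + 1)) powr (1 / real p) * c"
      using \<open>p \<ge> 1\<close> \<open>c \<ge> 0\<close> \<open>D > 0\<close> by (simp add: powr_mult power_powr_inverse)
    finally show "ereal (real (len p) powr (1 / real p)) \<le> ereal ((D * (real p + 1)) powr (1 / real p) * c)"
      by simp
  qed
  with lim show ?thesis
    by simp
qed

lemma affine_recurrence_le:
  fixes x :: "nat \<Rightarrow> real"
  assumes step: "\<And>p. x (Suc p) \<le> a + L * x p" and "L > 1"
  shows "x p + a / (L - 1) \<le> L ^ p * (x 0 + a / (L - 1))"
proof (induction p)
  case (Suc p)
  have "L * (a / (L - 1)) = a + a / (L - 1)"
    using \<open>L > 1\<close> by (simp add: field_simps)
  then have "x (Suc p) + a / (L - 1) \<le> L * (x p + a / (L - 1))"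
    using step[of p] by (simp add: distrib_left)
  also have "\<dots> \<le> L * (L ^ p * (x 0 + a / (L - 1)))"
    using Suc.IH \<open>L > 1\<close> by simp
  finally show ?case
    by simp
qed simp

lemma accumulated_growth_le:
  fixes x y :: "nat \<Rightarrow> real"
  assumes step: "\<And>p. y (Suc p) \<le> y p + x p" and x: "\<And>p. x p \<le> D * L ^ p"
    and "y 0 \<le> D" and "0 \<le> D" and "1 \<le> L"
  shows "y p \<le> D * (real p + 1) * L ^ p"
proof (induction p)
  case (Suc p)
  have "y (Suc p) \<le> D * (real p + 2) * L ^ p"
    using step[of p] x[of p] Suc.IH by (simp add: algebra_simps)
  also have "\<dots> \<le> D * (real p + 2) * L ^ Suc p"
    using \<open>0 \<le> D\<close> \<open>1 \<le> L\<close> by (intro mult_left_mono) (auto simp: mult_le_cancel_right1)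
  finally show ?case
    by (simp add: add.commute)
qed (simp add: \<open>y 0 \<le> D\<close>)

section \<open>Burau matrices bound the growth rate from below\<close>

lemma vec_max_component:
  fixes v :: "'a :: real_normed_vector vec"
  assumes "v \<in> carrier_vec n" and "v \<noteq> 0\<^sub>v n"
  obtains i where "i < n" and "norm (v $ i) > 0" and "\<And>k. k < n \<Longrightarrow> norm (v $ k) \<le> norm (v $ i)"
proof -
  have "\<exists>k<n. v $ k \<noteq> 0"
  proof (rule ccontr)
    assume "\<not> (\<exists>k<n. v $ k \<noteq> 0)"
    then have "v = 0\<^sub>v n"
      using assms(1) by (intro eq_vecI) auto
    with assms(2) show False
      by contradiction
  qed
  then obtain k0 where k0: "k0 < n" "v $ k0 \<noteq> 0"
    by blast
  define M where "M = Max ((\<lambda>k. norm (v $ k)) ` {..<n})"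
  have le_M: "norm (v $ k) \<le> M" if "k < n" for k
    unfolding M_def using that by (intro Max_ge) auto
  have "M \<in> (\<lambda>k. norm (v $ k)) ` {..<n}"
    unfolding M_def using k0(1) by (intro Max_in) auto
  then obtain i where "i < n" "norm (v $ i) = M"
    by auto
  moreover have "M > 0"
    using le_M[OF k0(1)] zero_less_norm_iff[of "v $ k0"] k0(2) by linarith
  ultimately show ?thesis
    using le_M that by auto
qed

lemma eigenvalue_power_le_row_norm:
  fixes A :: "complex mat"
  assumes A: "A \<in> carrier_mat n n" and "eigenvalue A \<mu>"
  shows "\<exists>i<n. \<forall>p. cmod \<mu> ^ p \<le> (\<Sum>k<n. cmod ((A ^\<^sub>m p) $$ (i, k)))"
proof -
  obtain v where ev: "eigenvector A v \<mu>"
    using assms(2) unfolding eigenvalue_def by auto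
  have "dim_row A = n"
    using A by simp
  moreover from ev have "v \<in> carrier_vec (dim_row A)" "v \<noteq> 0\<^sub>v (dim_row A)"
    unfolding eigenvector_def by blast+
  ultimately have v: "v \<in> carrier_vec n" "v \<noteq> 0\<^sub>v n"
    by metis+
  obtain i where i: "i < n" "cmod (v $ i) > 0" and le: "\<And>k. k < n \<Longrightarrow> cmod (v $ k) \<le> cmod (v $ i)"
    using vec_max_component[OF v] by blast
  have "cmod \<mu> ^ p \<le> (\<Sum>k<n. cmod ((A ^\<^sub>m p) $$ (i, k)))" for p
  proof -
    have "\<mu> ^ p * v $ i = (A ^\<^sub>m p *\<^sub>v v) $ i"
      using eigenvector_pow[OF A ev] v(1) i(1) by simp
    also have "\<dots> = (\<Sum>k<n. (A ^\<^sub>m p) $$ (i, k) * v $ k)"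
      using A v(1) i(1) by (simp add: scalar_prod_def lessThan_atLeast0)
    finally have "cmod \<mu> ^ p * cmod (v $ i) = cmod (\<Sum>k<n. (A ^\<^sub>m p) $$ (i, k) * v $ k)"
      by (metis norm_mult norm_power)
    also have "\<dots> \<le> (\<Sum>k<n. cmod ((A ^\<^sub>m p) $$ (i, k)) * cmod (v $ k))"
      by (simp add: norm_sum[THEN order.trans] norm_mult)
    also have "\<dots> \<le> (\<Sum>k<n. cmod ((A ^\<^sub>m p) $$ (i, k)) * cmod (v $ i))"
      using le by (intro sum_mono mult_left_mono) auto
    also have "\<dots> = (\<Sum>k<n. cmod ((A ^\<^sub>m p) $$ (i, k))) * cmod (v $ i)"
      by (rule sum_distrib_right[symmetric])
    finally show ?thesis
      using i(2) by simp
  qed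
  with i(1) show ?thesis
    by blast
qed

(* Braid automorphisms satisfy both hypotheses: they map each generator to a conjugate of a generator. *)
context
  fixes \<phi> :: fendo
  assumes letters_image: "\<And>j. j \<in> {1..5} \<Longrightarrow> fst ` set (\<phi> j) \<subseteq> {1..5}"
    and abel_ev_image: "\<And>t j. t \<noteq> 0 \<Longrightarrow> j \<in> {1..5} \<Longrightarrow> abel_ev t (\<phi> j) = t"
begin

lemma burau_power_nth:
  assumes t: "t \<noteq> 0" and "i < 5" "k < 5"
  shows "(burau \<phi> t ^\<^sub>m p) $$ (i, k) = foxev t (Suc k) ((act \<phi> ^^ p) (gen (Suc i)))"
  using \<open>k < 5\<close>
proof (induction p arbitrary: k)
  case 0
  then show ?case
    using \<open>i < 5\<close> by (simp add: burau_def gen_def foxev_Cons)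
next
  case (Suc p)
  let ?w = "(act \<phi> ^^ p) (gen (Suc i))"
  have letters: "fst ` set ?w \<subseteq> {1..5}"
    using \<open>i < 5\<close> by (intro letters_act_iter letters_image) (auto simp: gen_def)
  have "(burau \<phi> t ^\<^sub>m Suc p) $$ (i, k) = (\<Sum>j<5. (burau \<phi> t ^\<^sub>m p) $$ (i, j) * burau \<phi> t $$ (j, k))"
    using \<open>i < 5\<close> Suc.prems by (simp add: burau_def scalar_prod_def lessThan_atLeast0)
  also have "\<dots> = (\<Sum>j<5. foxev t (Suc j) ?w * foxev t (Suc k) (\<phi> (Suc j)))"
    using Suc by (simp add: burau_def)
  also have "\<dots> = foxev t (Suc k) (act \<phi> ?w)"
    using foxev_act[OF t abel_ev_image[OF t] letters] by (simp add: sum.atLeast1_atMost_eq)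
  finally show ?case
    by simp
qed

lemma spectral_radius_burau_le_GR:
  assumes t: "cmod t = 1"
  shows "ereal (spectral_radius (burau \<phi> t)) \<le> GR \<phi>"
proof -
  have A: "burau \<phi> t \<in> carrier_mat 5 5"
    by (simp add: burau_def)
  have "t \<noteq> 0"
    using t by auto
  obtain \<mu> where "eigenvalue (burau \<phi> t) \<mu>" and radius: "spectral_radius (burau \<phi> t) = cmod \<mu>"
    using spectral_radius_mem_max(1)[OF A] by (auto simp: spectrum_def)
  then obtain i where "i < 5"
    and row: "\<And>p. cmod \<mu> ^ p \<le> (\<Sum>k<5. cmod ((burau \<phi> t ^\<^sub>m p) $$ (i, k)))"
    using eigenvalue_power_le_row_norm[OF A] by blast
  let ?len = "\<lambda>p. length ((act \<phi> ^^ p) (gen (Suc i)))"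
  have "cmod \<mu> ^ p \<le> 5 * real (?len p)" for p
  proof -
    have "(\<Sum>k<5. cmod ((burau \<phi> t ^\<^sub>m p) $$ (i, k))) \<le> (\<Sum>k<5::nat. real (?len p))"
      using t \<open>t \<noteq> 0\<close> \<open>i < 5\<close>
      by (intro sum_mono) (simp add: burau_power_nth norm_foxev_le_length)
    with row[of p] show ?thesis
      by simp
  qed
  then have "ereal (cmod \<mu>) \<le> limsup (\<lambda>p. ereal (real (?len p) powr (1 / real p)))"
    by (rule limsup_root_ge) auto
  also have "\<dots> \<le> GR \<phi>"
    unfolding GR_def using \<open>i < 5\<close> by (intro SUP_upper) (simp add: F5_def gen_def)
  finally show ?thesis
    using radius by simp
qed

end

lemma alpha_unfold:
  "alpha j = act (sigma 3) (act (sigma 4) (act (sigma 1) (act (sigma 2) (act (sigma 3)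
     (act (sigma 4) (gen j))))))"
  by (simp add: alpha_def rcomp_def idendo_def)

lemma alpha_1: "alpha 1 = [(1, False), (2, False), (1, True)]"
  and alpha_2: "alpha 2 = [(1, False), (3, False), (4, False), (3, True), (1, True)]"
  and alpha_3: "alpha 3 = [(1, False), (3, False), (5, False), (3, True), (1, True)]"
  and alpha_4: "alpha 4 = [(1, False), (3, False), (1, True)]"
  and alpha_5: "alpha 5 = [(1, False)]"
  by (simp_all add: alpha_unfold act_def sigma_def gen_def winv_def red_cons_def cancels_def)

(* Case distinctions over {1..5} produce Suc 0 in place of 1. *)
lemmas alpha_simps = alpha_1 alpha_1[unfolded One_nat_def] alpha_2 alpha_3 alpha_4 alpha_5

lemma atLeastAtMost_1_5: "{1..5::nat} = {1, 2, 3, 4, 5}"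
  by auto

lemma letters_alpha: "j \<in> {1..5} \<Longrightarrow> fst ` set (alpha j) \<subseteq> {1..5}"
  unfolding atLeastAtMost_1_5 by (auto simp: alpha_simps)

lemma abel_ev_alpha: "t \<noteq> 0 \<Longrightarrow> j \<in> {1..5} \<Longrightarrow> abel_ev t (alpha j) = t"
  unfolding atLeastAtMost_1_5 by (auto simp: alpha_simps field_simps)

lemma spectral_radius_burau_alpha_le_GR: "cmod t = 1 \<Longrightarrow> ereal (spectral_radius (burau alpha t)) \<le> GR alpha"
  by (rule spectral_radius_burau_le_GR[OF letters_alpha abel_ev_alpha])

lemma det_mat_Suc:
  "det (mat (Suc n) (Suc n) f :: 'a :: comm_ring_1 mat) =
    (\<Sum>j<Suc n. f (0, j) * ((-1) ^ j * det (mat n n (\<lambda>(i, k). f (Suc i, if k < j then k else Suc k)))))"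
proof -
  have "mat_delete (mat (Suc n) (Suc n) f) 0 j = mat n n (\<lambda>(i, k). f (Suc i, if k < j then k else Suc k))"
    if "j < Suc n" for j
    using that by (intro eq_matI) (auto simp: mat_delete_def)
  then show ?thesis
    by (subst laplace_expansion_row[of _ "Suc n" 0]) (auto simp: cofactor_def intro!: sum.cong)
qed

(* The simplifier decides the condition of an if before rewriting its branches, so the minors
   of zero entries are never expanded. *)
lemma det_mat_Suc_sparse:
  "det (mat (Suc n) (Suc n) f :: 'a :: comm_ring_1 mat) =
    (\<Sum>j<Suc n. if f (0, j) = 0 then 0
      else f (0, j) * ((-1) ^ j * det (mat n n (\<lambda>(i, k). f (Suc i, if k < j then k else Suc k)))))"
  unfolding det_mat_Suc by (intro sum.cong) simp_all

lemma det_mat_0: "det (mat 0 0 f) = 1"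
  by (rule det_dim_zero) simp

lemma char_poly_matrix_mat:
  "char_poly_matrix (mat n n f) = mat n n (\<lambda>(i, k). (if i = k then [:0, 1:] else 0) + [:- f (i, k):])"
  by (intro eq_matI) (auto simp: char_poly_matrix_def)

lemma burau_alpha_minus_1:
  "burau alpha (-1) = mat_of_rows_list 5
     [[2, -1, 0, 0, 0], [2, 0, -2, 1, 0], [2, 0, -2, 0, 1], [2, 0, -1, 0, 0], [1, 0, 0, 0, 0]]"
  (is "_ = ?B")
proof (rule eq_matI)
  fix i k
  assume "i < dim_row ?B" and "k < dim_col ?B"
  then have "i \<in> {0, 1, 2, 3, 4}" and "k \<in> {0, 1, 2, 3, 4}"
    by (auto simp: mat_of_rows_list_def)
  then show "burau alpha (-1) $$ (i, k) = ?B $$ (i, k)"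
    by (auto simp: mat_of_rows_list_def burau_def alpha_simps foxev_Cons numeral_2_eq_2[symmetric])
qed (simp_all add: burau_def mat_of_rows_list_def)

lemma char_poly_burau_alpha: "char_poly (burau alpha (-1)) = [:-1, 1:] * [:1, 1, -1, 1, 1:]"
  unfolding burau_alpha_minus_1 mat_of_rows_list_def char_poly_def
  by (simp add: char_poly_matrix_mat det_mat_Suc_sparse det_mat_0 eval_nat_numeral)

lemma lam_gt_1: "lam > 1"
  and lam_root: "lam ^ 4 - lam ^ 3 - lam ^ 2 - lam + 1 = 0"
proof -
  define f where "f x = x ^ 4 - x ^ 3 - x ^ 2 - x + (1 :: real)" for x
  define S where "S = {x. 0 < x \<and> f x = 0}"
  have "S \<subseteq> {x. poly [:1, -1, -1, -1, 1:] x = 0}"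
    by (auto simp: S_def f_def algebra_simps eval_nat_numeral)
  then have "finite S"
    by (rule finite_subset) (rule poly_roots_finite, simp)
  have "\<exists>x\<ge>1. x \<le> 2 \<and> f x = 0"
    by (rule IVT') (auto simp: f_def intro!: continuous_intros)
  then obtain x0 where "1 \<le> x0" "x0 \<le> 2" "f x0 = 0"
    by blast
  moreover have "f 1 \<noteq> 0"
    by (simp add: f_def)
  ultimately have "x0 > 1" and "x0 \<in> S"
    by (auto simp: S_def order.strict_iff_order)
  have "lam = Max S"
    by (simp add: lam_def S_def f_def)
  have "lam \<in> S"
    using \<open>finite S\<close> \<open>x0 \<in> S\<close> unfolding \<open>lam = Max S\<close> by (intro Max_in) auto
  moreover have "x0 \<le> lam"
    using \<open>finite S\<close> \<open>x0 \<in> S\<close> unfolding \<open>lam = Max S\<close> by (rule Max_ge)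
  ultimately show "lam > 1" and "lam ^ 4 - lam ^ 3 - lam ^ 2 - lam + 1 = 0"
    using \<open>x0 > 1\<close> by (auto simp: S_def f_def)
qed

lemma lam_minus_inverse_pos: "lam - 1 / lam > 0"
proof -
  have "1 / lam < 1"
    using lam_gt_1 by simp
  with lam_gt_1 show ?thesis
    by linarith
qed

lemma poly_char_poly_burau_alpha_neg_lam: "poly (char_poly (burau alpha (-1))) (- complex_of_real lam) = 0"
proof -
  have "poly [:1, 1, -1, 1, 1:] (- complex_of_real lam) = complex_of_real (lam ^ 4 - lam ^ 3 - lam ^ 2 - lam + 1)"
    by (simp add: algebra_simps eval_nat_numeral)
  also have "\<dots> = 0"
    by (simp only: lam_root of_real_0)
  finally show ?thesis
    unfolding char_poly_burau_alpha poly_mult by simp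
qed

lemma lam_le_spectral_radius_burau_alpha: "lam \<le> spectral_radius (burau alpha (-1))"
proof -
  have A: "burau alpha (-1) \<in> carrier_mat 5 5"
    by (simp add: burau_def)
  then have "- complex_of_real lam \<in> spectrum (burau alpha (-1))"
    by (simp add: spectrum_root_char_poly poly_char_poly_burau_alpha_neg_lam)
  then have "cmod (- complex_of_real lam) \<le> spectral_radius (burau alpha (-1))"
    by (intro spectral_radius_mem_max(2)[OF A _ imageI]) simp_all
  then show ?thesis
    by simp
qed

definition weight :: "(nat \<Rightarrow> real) \<Rightarrow> letter list \<Rightarrow> real" where
  "weight h w = (\<Sum>l\<leftarrow>w. h (fst l))"

lemma weight_Nil [simp]: "weight h [] = 0"
  and weight_Cons [simp]: "weight h (l # w) = h (fst l) + weight h w"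
  and weight_append [simp]: "weight h (u @ v) = weight h u + weight h v"
  by (simp_all add: weight_def)

lemma weight_winv [simp]: "weight h (winv w) = weight h w"
  by (induction w) (simp_all add: winv_Cons letter_inv_def)

lemma weight_one: "weight (\<lambda>_. 1) w = real (length w)"
  by (induction w) simp_all

lemma weight_add: "weight (\<lambda>j. f j + g j) w = weight f w + weight g w"
  and weight_scale: "weight (\<lambda>j. c * f j) w = c * weight f w"
  by (induction w) (simp_all add: algebra_simps)

lemma weight_nonneg: "(\<And>j. 0 \<le> h j) \<Longrightarrow> 0 \<le> weight h w"
  by (induction w) (simp_all add: add_nonneg_nonneg)

lemma weight_red_cons_le:
  assumes "\<And>j. 0 \<le> h j"
  shows "weight h (red_cons l w) \<le> weight h (l # w)"
proof (cases w)
  case (Cons m r)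
  then show ?thesis
    using assms[of "fst l"] assms[of "fst m"] by (simp add: red_cons_def)
qed (simp add: red_cons_def)

lemma weight_fred_le:
  assumes "\<And>j. 0 \<le> h j"
  shows "weight h (fred w) \<le> weight h w"
proof (induction w)
  case (Cons l w)
  have "weight h (fred (l # w)) \<le> h (fst l) + weight h (fred w)"
    using weight_red_cons_le[of h l "fred w", OF assms] by simp
  with Cons.IH show ?case
    by simp
qed simp

lemma weight_act_le:
  assumes "\<And>j. 0 \<le> h j" and "\<And>j. weight h (\<phi> j) \<le> g j"
  shows "weight h (act \<phi> w) \<le> weight g w"
proof -
  have "weight h (concat (map (img \<phi>) w)) \<le> weight g w"
  proof (induction w)
    case (Cons l w)
    have "weight h (img \<phi> l) \<le> g (fst l)"
      using assms(2) by (simp add: img_def)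
    with Cons.IH show ?case
      by simp
  qed simp
  then show ?thesis
    unfolding act_img using weight_fred_le[OF assms(1)] by (rule order.trans[rotated])
qed

lemma weight_act_conj_le:
  "(\<And>j. 0 \<le> h j) \<Longrightarrow> weight h (act (\<lambda>j. d @ \<phi> j @ winv d) w) \<le> 2 * weight h d + weight h (act \<phi> w)"
  using weight_fred_le[of h "d @ act \<phi> w @ winv d"] by (simp add: act_conj)

section \<open>The growth rate of \<open>alpha\<close> is at most \<open>lam\<close>\<close>

text \<open>
  On the image of \<open>emb\<close>, \<open>alpha\<close> acts
  as \<open>model_map\<close>, that is \<open>core_map\<close> followed by conjugation with \<open>x\<^sub>1 x\<^sub>6\<close>. The map
  \<open>core_map\<close> permutes \<open>x\<^sub>1, \<dots>, x\<^sub>5\<close>, and its transition matrix on \<open>x\<^sub>6, \<dots>, x\<^sub>9\<close> has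
  Perron-Frobenius eigenvalue \<open>lam\<close> with eigenvector \<open>pf_weight\<close>.
\<close>

definition emb :: fendo where
  "emb j = (if j = 1 then [(1, False)]
     else if j = 2 then [(6, False), (2, False), (6, True)]
     else if j = 3 then [(6, False), (7, False), (3, False), (7, True), (6, True)]
     else if j = 4 then [(6, False), (7, False), (8, False), (4, False), (8, True), (7, True), (6, True)]
     else if j = 5 then [(6, False), (7, False), (8, False), (9, False), (5, False), (9, True), (8, True),
       (7, True), (6, True)]
     else [])"

definition retr :: fendo where
  "retr j = (if j \<in> {1..5} then gen j else [])"

definition core_map :: fendo where
  "core_map j = (if j = 1 then [(2, False)] else if j = 2 then [(4, False)] else if j = 3 then [(5, False)]
     else if j = 4 then [(3, False)] else if j = 5 then [(1, False)]
     else if j = 6 then [(7, False), (3, False), (8, False)]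
     else if j = 7 then [(9, False)]
     else if j = 8 then [(9, True), (8, True), (3, True)]
     else if j = 9 then [(7, True), (6, True)] else [])"

definition conj_word :: "letter list" where
  "conj_word = [(1, False), (6, False)]"

definition model_map :: fendo where
  "model_map j = conj_word @ core_map j @ winv conj_word"

lemma retr_emb: "j \<in> {1..5} \<Longrightarrow> rcomp emb retr j = gen j"
  unfolding atLeastAtMost_1_5
  by (auto simp: rcomp_def emb_def retr_def act_def gen_def winv_def red_cons_def cancels_def)

lemma alpha_emb: "j \<in> {1..5} \<Longrightarrow> rcomp alpha emb j = rcomp emb model_map j"
  unfolding atLeastAtMost_1_5
  by (auto simp: rcomp_def alpha_simps emb_def model_map_def core_map_def conj_word_def act_def
      winv_def red_cons_def cancels_def)

lemma act_retr_emb: "fst ` set w \<subseteq> {1..5} \<Longrightarrow> act retr (act emb w) = fred w"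
  using retr_emb by (auto simp: act_rcomp[symmetric] act_gen[symmetric] intro!: act_cong)

lemma act_emb_alpha_iter:
  assumes "fst ` set g \<subseteq> {1..5}"
  shows "act emb ((act alpha ^^ p) g) = (act model_map ^^ p) (act emb g)"
proof (induction p)
  case (Suc p)
  have "fst ` set ((act alpha ^^ p) g) \<subseteq> {1..5}"
    using letters_alpha assms by (rule letters_act_iter)
  then have "act emb (act alpha ((act alpha ^^ p) g)) = act model_map (act emb ((act alpha ^^ p) g))"
    using alpha_emb by (auto simp: act_rcomp[symmetric] intro!: act_cong)
  with Suc.IH show ?case
    by simp
qed simp

definition pf_weight :: "nat \<Rightarrow> real" where
  "pf_weight j = (if j = 6 then lam - 1 / lam else if j = 7 then 1 / lam else if j = 8 then 1 / (lam - 1)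
     else if j = 9 then 1 else 0)"

definition low_weight :: "nat \<Rightarrow> real" where
  "low_weight j = (if j \<in> {1..5} then 1 else 0)"

lemma pf_weight_nonneg: "0 \<le> pf_weight j"
  using lam_gt_1 lam_minus_inverse_pos by (simp add: pf_weight_def)

lemma low_weight_nonneg: "0 \<le> low_weight j"
  by (simp add: low_weight_def)

lemma weight_pf_core_map: "weight pf_weight (core_map j) = lam * pf_weight j"
proof -
  have "lam \<noteq> 0" "lam - 1 \<noteq> 0"
    using lam_gt_1 by auto
  have root: "2 * lam - 1 = (lam ^ 2 - 1) * (lam * (lam - 1))"
    using lam_root by (simp add: algebra_simps eval_nat_numeral)
  have "1 / lam + 1 / (lam - 1) = (2 * lam - 1) / (lam * (lam - 1))"
    using \<open>lam \<noteq> 0\<close> \<open>lam - 1 \<noteq> 0\<close> by (simp add: field_simps)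
  also have "\<dots> = lam ^ 2 - 1"
    unfolding root using \<open>lam \<noteq> 0\<close> \<open>lam - 1 \<noteq> 0\<close> by simp
  also have "\<dots> = lam * (lam - 1 / lam)"
    using \<open>lam \<noteq> 0\<close> by (simp add: field_simps power2_eq_square)
  finally show ?thesis
    using \<open>lam \<noteq> 0\<close> \<open>lam - 1 \<noteq> 0\<close> by (simp add: core_map_def pf_weight_def field_simps)
qed

lemma weight_low_core_map: "\<exists>K\<ge>0. \<forall>j. weight low_weight (core_map j) \<le> low_weight j + K * pf_weight j"
proof (intro exI conjI allI)
  let ?K = "max (1 / (lam - 1 / lam)) (lam - 1)"
  show "0 \<le> ?K"
    using lam_gt_1 by simp
  fix j
  have "1 \<le> ?K * (lam - 1 / lam)" and "1 \<le> ?K * (1 / (lam - 1))"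
    using lam_gt_1 lam_minus_inverse_pos by (auto simp: field_simps max_def)
  then show "weight low_weight (core_map j) \<le> low_weight j + ?K * pf_weight j"
    using pf_weight_nonneg[of j] \<open>0 \<le> ?K\<close>
    by (auto simp: core_map_def low_weight_def pf_weight_def)
qed

lemma weight_pf_conj_word: "weight pf_weight conj_word = lam - 1 / lam"
  and weight_low_conj_word: "weight low_weight conj_word = 1"
  by (simp_all add: conj_word_def pf_weight_def low_weight_def)

lemma weight_act_model_map_le:
  "(\<And>j. 0 \<le> h j) \<Longrightarrow> weight h (act model_map w) \<le> 2 * weight h conj_word + weight h (act core_map w)"
  unfolding model_map_def[abs_def] by (rule weight_act_conj_le)

lemma weight_pf_model_map_iter_le:
  "weight pf_weight ((act model_map ^^ p) w) \<le> lam ^ p * (weight pf_weight w + 2 * (lam - 1 / lam) / (lam - 1))"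
proof -
  have step: "weight pf_weight (act model_map v) \<le> 2 * (lam - 1 / lam) + lam * weight pf_weight v" for v
  proof -
    have "weight pf_weight (act core_map v) \<le> weight (\<lambda>j. lam * pf_weight j) v"
      by (rule weight_act_le[OF pf_weight_nonneg]) (simp add: weight_pf_core_map)
    then show ?thesis
      using weight_act_model_map_le[of pf_weight v, OF pf_weight_nonneg]
      by (simp add: weight_scale weight_pf_conj_word)
  qed
  have "0 \<le> 2 * (lam - 1 / lam) / (lam - 1)"
    using lam_gt_1 lam_minus_inverse_pos by simp
  moreover have "weight pf_weight ((act model_map ^^ p) w) + 2 * (lam - 1 / lam) / (lam - 1)
      \<le> lam ^ p * (weight pf_weight w + 2 * (lam - 1 / lam) / (lam - 1))"
    using step by (intro affine_recurrence_le[where x = "\<lambda>p. weight pf_weight ((act model_map ^^ p) w)",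
        simplified] lam_gt_1)
  ultimately show ?thesis
    by linarith
qed

lemma weight_low_model_map_iter_le:
  "\<exists>D>0. \<forall>p. weight low_weight ((act model_map ^^ p) w) \<le> D * (real p + 1) * lam ^ p"
proof -
  obtain K where "K \<ge> 0" and K: "\<And>j. weight low_weight (core_map j) \<le> low_weight j + K * pf_weight j"
    using weight_low_core_map by blast
  define B where "B = weight pf_weight w + 2 * (lam - 1 / lam) / (lam - 1)"
  define D where "D = max (weight low_weight w) (2 + K * B) + 1"
  have step: "weight low_weight (act model_map v) \<le> weight low_weight v + (2 + K * weight pf_weight v)" for v
  proof -
    have "weight low_weight (act core_map v) \<le> weight (\<lambda>j. low_weight j + K * pf_weight j) v"
      by (rule weight_act_le[OF low_weight_nonneg K])
    then show ?thesis
      using weight_act_model_map_le[of low_weight v, OF low_weight_nonneg]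
      by (simp add: weight_add weight_scale weight_low_conj_word)
  qed
  have increment: "2 + K * weight pf_weight ((act model_map ^^ p) w) \<le> D * lam ^ p" for p
  proof -
    have "1 \<le> lam ^ p"
      using lam_gt_1 by simp
    moreover have "K * weight pf_weight ((act model_map ^^ p) w) \<le> K * B * lam ^ p"
      using mult_left_mono[OF weight_pf_model_map_iter_le \<open>K \<ge> 0\<close>] by (simp add: B_def mult_ac)
    ultimately have "2 + K * weight pf_weight ((act model_map ^^ p) w) \<le> (2 + K * B) * lam ^ p"
      unfolding distrib_right by linarith
    also have "\<dots> \<le> D * lam ^ p"
      unfolding D_def using lam_gt_1 by (intro mult_right_mono) auto
    finally show ?thesis .
  qed
  have "weight low_weight w \<le> D" and "0 < D"
    using weight_nonneg[of low_weight w, OF low_weight_nonneg] by (auto simp: D_def)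
  with step increment lam_gt_1 show ?thesis
    by (intro exI[of _ D] conjI allI accumulated_growth_le
        [where y = "\<lambda>p. weight low_weight ((act model_map ^^ p) w)"]) simp_all
qed

lemma alpha_iter_eq_retr_model_map_iter:
  assumes "g \<in> F5"
  shows "(act alpha ^^ p) g = act retr ((act model_map ^^ p) (act emb g))"
proof -
  have g: "fst ` set g \<subseteq> {1..5}" "freduced g"
    using assms by (auto simp: F5_def)
  have "freduced ((act alpha ^^ p) g)"
    using g(2) by (rule freduced_act_iter)
  moreover have "fst ` set ((act alpha ^^ p) g) \<subseteq> {1..5}"
    using letters_alpha g(1) by (rule letters_act_iter)
  ultimately have "(act alpha ^^ p) g = act retr (act emb ((act alpha ^^ p) g))"
    by (simp add: act_retr_emb fred_freduced)
  then show ?thesis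
    by (simp add: act_emb_alpha_iter[OF g(1)])
qed

lemma length_act_retr_le: "real (length (act retr w)) \<le> weight low_weight w"
  using weight_act_le[of "\<lambda>_. 1" retr low_weight w]
  by (simp add: weight_one retr_def low_weight_def gen_def)

lemma growth_alpha_le:
  assumes "g \<in> F5"
  shows "\<exists>D>0. \<forall>p. real (length ((act alpha ^^ p) g)) \<le> D * (real p + 1) * lam ^ p"
  using weight_low_model_map_iter_le[of "act emb g"] length_act_retr_le
  unfolding alpha_iter_eq_retr_model_map_iter[OF assms] by (meson order.trans)

lemma GR_alpha_le: "GR alpha \<le> ereal lam"
  unfolding GR_def
proof (rule SUP_least)
  fix g
  assume "g \<in> F5"
  then obtain D where "D > 0" and "\<And>p. real (length ((act alpha ^^ p) g)) \<le> D * (real p + 1) * lam ^ p"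
    using growth_alpha_le by blast
  then show "limsup (\<lambda>p. ereal (real (length ((act alpha ^^ p) g)) powr (1 / real p))) \<le> ereal lam"
    using lam_gt_1 by (intro limsup_root_le) auto
qed

theorem mainTheorem8:
  shows "alpha 1 = [(1, False), (2, False), (1, True)]
    \<and> alpha 2 = [(1, False), (3, False), (4, False), (3, True), (1, True)]
    \<and> alpha 3 = [(1, False), (3, False), (5, False), (3, True), (1, True)]
    \<and> alpha 4 = [(1, False), (3, False), (1, True)]
    \<and> alpha 5 = [(1, False)]
    \<and> char_poly (burau alpha (-1)) = [:-1, 1:] * [:1, 1, -1, 1, 1:]
    \<and> poly (char_poly (burau alpha (-1))) (- complex_of_real lam) = 0
    \<and> GR alpha = ereal lam
    \<and> spectral_radius (burau alpha (-1)) = lam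
    \<and> (SUP t\<in>{t::complex. cmod t = 1}. ereal (spectral_radius (burau alpha t))) = GR alpha"
proof -
  have R_le_GR: "ereal (spectral_radius (burau alpha (-1))) \<le> GR alpha"
    by (rule spectral_radius_burau_alpha_le_GR) simp
  have "spectral_radius (burau alpha (-1)) \<le> lam"
    using order.trans[OF R_le_GR GR_alpha_le] by simp
  with lam_le_spectral_radius_burau_alpha have R: "spectral_radius (burau alpha (-1)) = lam"
    by simp
  with R_le_GR GR_alpha_le have GR: "GR alpha = ereal lam"
    by simp
  have SUP: "(SUP t\<in>{t::complex. cmod t = 1}. ereal (spectral_radius (burau alpha t))) = GR alpha"
  proof (rule antisym)
    show "(SUP t\<in>{t. cmod t = 1}. ereal (spectral_radius (burau alpha t))) \<le> GR alpha"
      by (rule SUP_least) (simp add: spectral_radius_burau_alpha_le_GR)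
    show "GR alpha \<le> (SUP t\<in>{t. cmod t = 1}. ereal (spectral_radius (burau alpha t)))"
      using R GR by (intro SUP_upper2[of "-1"]) simp_all
  qed
  show ?thesis
    using alpha_1 alpha_2 alpha_3 alpha_4 alpha_5 char_poly_burau_alpha poly_char_poly_burau_alpha_neg_lam
      GR R SUP by blast
qed

end
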